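(* Let $D=2$, $C/2<K<C$, $U=rC$ and $\bar a=rK$ for some positive integer $r$, and let all user and creator types be drawn i.i.d. from the uniform distribution on $\{x\in\mathbb R^2_{\ge0}:\|x\|_2=1\}$. Write creator types as $c_i=(\cos(X_i\pi/2),\sin(X_i\pi/2))$ with $X_1\le\dots\le X_C$, define $R_1=\left[0,\frac{X_1+X_{K+1}}2\right]$, $R_i=\left(\frac{X_{i-1}+X_{i+K-1}}2,\frac{X_i+X_{i+K}}2\right]$ for $2\le i\le C-K$, $R_{C-K+1}=\left(\frac{X_{C-K}+X_C}2,1\right]$, and let $U_i$ be the number of users whose type $(\cos(y\pi/2),\sin(y\pi/2))$ has $y\in R_i$. Then $$\Pr(\text{at least }K\text{ creators stay after }t=0\text{ under }UC_0)=\sum_{i=1}^{C-K+1}\Pr\left(\frac{\sum_{j=1}^iU_j}{rC}\ge\frac KC\ \text{and}\ \frac{\sum_{j=i}^{C-K+1}U_j}{rC}\ge\frac KC\right).$$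
   Context: Users $\mathcal U_0=\{1,\dots,U\}$, creators $\mathcal C_0=\{1,\dots,C\}$. At $t=0$ the user-centric recommendation assigns each user $i$ the set $UC_0(i)\in\arg\max_{S\subseteq\mathcal C_0,|S|\le K}\sum_{j\in S}u_i^Tc_j$. Creator $j$ stays after $t=0$ if $|\{i\in\mathcal U_0:j\in UC_0(i)\}|\ge\bar a$. *)

theory Defs
  imports "HOL-Probability.Probability"
begin

(* Types in dimension D = 2: the nonnegative quarter of the unit circle,
  parametrised by the angle parameter y in [0,1] as (cos(y pi/2), sin(y pi/2)).
  The uniform distribution on the arc is the image of the uniform distribution
  of y on [0,1]. *)

definition ctype :: "real \<Rightarrow> real \<times> real" where
  "ctype y = (cos (y * pi / 2), sin (y * pi / 2))"

definition ip :: "real \<times> real \<Rightarrow> real \<times> real \<Rightarrow> real" where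
  "ip a b = fst a * fst b + snd a * snd b"

definition unif01 :: "real measure" where
  "unif01 = uniform_measure lborel {0..1}"

definition model :: "nat \<Rightarrow> nat \<Rightarrow> ((nat \<Rightarrow> real) \<times> (nat \<Rightarrow> real)) measure" where
  "model U C = (PiM {..<U} (\<lambda>_. unif01)) \<Otimes>\<^sub>M (PiM {..<C} (\<lambda>_. unif01))"

definition is_UC0 :: "nat \<Rightarrow> nat \<Rightarrow> nat \<Rightarrow> (nat \<Rightarrow> real) \<Rightarrow> (nat \<Rightarrow> real)
    \<Rightarrow> (nat \<Rightarrow> nat set) \<Rightarrow> bool" where
  "is_UC0 U C K y x S \<longleftrightarrow>
     (\<forall>i<U. S i \<subseteq> {..<C} \<and> card (S i) \<le> K \<and>
        (\<forall>T. T \<subseteq> {..<C} \<longrightarrow> card T \<le> K \<longrightarrow>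
           (\<Sum>j\<in>T. ip (ctype (y i)) (ctype (x j))) \<le> (\<Sum>j\<in>S i. ip (ctype (y i)) (ctype (x j)))))"

definition num_stay :: "nat \<Rightarrow> nat \<Rightarrow> nat \<Rightarrow> (nat \<Rightarrow> nat set) \<Rightarrow> nat" where
  "num_stay U C abar S = card {j\<in>{..<C}. abar \<le> card {i\<in>{..<U}. j \<in> S i}}"

definition ordstat :: "nat \<Rightarrow> (nat \<Rightarrow> real) \<Rightarrow> nat \<Rightarrow> real" where
  "ordstat C x k = sort (map x [0..<C]) ! (k - 1)"

definition region :: "nat \<Rightarrow> nat \<Rightarrow> (nat \<Rightarrow> real) \<Rightarrow> nat \<Rightarrow> real set" where
  "region C K X i =
     (if i = 1 then {0 .. (X 1 + X (K + 1)) / 2}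
      else if i = C - K + 1 then {(X (C - K) + X C) / 2 <.. 1}
      else {(X (i - 1) + X (i + K - 1)) / 2 <.. (X i + X (i + K)) / 2})"

definition Ucount :: "nat \<Rightarrow> nat \<Rightarrow> nat \<Rightarrow> (nat \<Rightarrow> real) \<Rightarrow> (nat \<Rightarrow> real) \<Rightarrow> nat \<Rightarrow> nat" where
  "Ucount U C K y x i = card {l\<in>{..<U}. y l \<in> region C K (ordstat C x) i}"

end

theory Submission
  imports Defs
begin

(* Almost surely the creator angles are distinct, every user angle lies in (0,1), and no user
  angle is the midpoint of two creator angles. The inner product cos(|y - x| pi/2) is then
  positive and strictly decreasing in the angular distance, so each user's unique optimal
  recommendation is its K angularly nearest creators: the ranks i..i+K-1, where R_i is the
  region containing the user. As C <= 2K, a rank p <= K is recommended exactly to the users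
  with i <= p and a rank p > K exactly to those with i >= p-K+1. Hence the ranks recommended
  to at least rK users form an upper segment of {1..K} and a lower segment of {K+1..C}, and
  there are at least K of them iff for some i both U_1+...+U_i and U_i+...+U_(C-K+1) are at
  least rK. Since 2rK > rC = U, at most one i qualifies: the events are disjoint. *)

lemma sum_less_sum_dominating_set:
  fixes w :: "'a \<Rightarrow> real"
  assumes "finite J" "W \<subseteq> J" "T \<subseteq> J" "card T \<le> card W" "T \<noteq> W"
    and pos: "\<And>b. b \<in> W \<Longrightarrow> 0 < w b"
    and dom: "\<And>a b. a \<in> J - W \<Longrightarrow> b \<in> W \<Longrightarrow> w a < w b"
  shows "sum w T < sum w W"
proof -
  have fin: "finite W" "finite T" using assms(1-3) finite_subset by auto
  have "W - T \<noteq> {}"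
    using card_seteq[OF fin(2) _ assms(4)] assms(5) by blast
  define \<theta> where "\<theta> = Max (insert 0 (w ` (J - W)))"
  have fin_\<theta>: "finite (insert 0 (w ` (J - W)))" using assms(1) by simp
  have \<theta>_ge: "0 \<le> \<theta>" "\<And>a. a \<in> J - W \<Longrightarrow> w a \<le> \<theta>"
    using fin_\<theta> by (auto simp: \<theta>_def)
  have \<theta>_less: "\<theta> < w b" if "b \<in> W" for b
  proof -
    have "\<theta> \<in> insert 0 (w ` (J - W))" unfolding \<theta>_def using fin_\<theta> by (rule Max_in) simp
    then show ?thesis using pos[OF that] dom[OF _ that] by auto
  qed
  have card_le: "card (T - W) \<le> card (W - T)"
    using fin card_Int_Diff[of T W] card_Int_Diff[of W T] assms(4) by (simp add: Int_commute)
  have "sum w (T - W) \<le> of_nat (card (T - W)) * \<theta>"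
    using \<theta>_ge(2) assms(3) by (intro sum_bounded_above) auto
  also have "\<dots> \<le> of_nat (card (W - T)) * \<theta>"
    using card_le \<theta>_ge(1) by (intro mult_right_mono) auto
  also have "\<dots> < sum w (W - T)"
    using sum_strict_mono[of "W - T" "\<lambda>_. \<theta>" w] fin \<open>W - T \<noteq> {}\<close> \<theta>_less by simp
  finally show ?thesis
    using fin sum.Int_Diff[of T w W] sum.Int_Diff[of W w T] by (simp add: Int_commute)
qed

lemma ip_ctype: "ip (ctype y) (ctype x) = cos (\<bar>y - x\<bar> * pi / 2)"
proof -
  have "ip (ctype y) (ctype x) = cos ((y - x) * pi / 2)"
    by (simp add: ip_def ctype_def cos_diff[symmetric] left_diff_distrib diff_divide_distrib)
  also have "\<dots> = cos \<bar>(y - x) * pi / 2\<bar>" by (simp only: cos_abs_real)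
  finally show ?thesis by (simp add: abs_mult)
qed

lemma ip_ctype_pos:
  assumes "\<bar>y - x\<bar> < 1"
  shows "0 < ip (ctype y) (ctype x)"
proof -
  have "0 \<le> \<bar>y - x\<bar> * pi" "\<bar>y - x\<bar> * pi < pi" using assms by auto
  then show ?thesis unfolding ip_ctype by (intro cos_gt_zero_pi) linarith+
qed

lemma ip_ctype_less:
  assumes "\<bar>y - b\<bar> < \<bar>y - a\<bar>" "\<bar>y - a\<bar> \<le> 1"
  shows "ip (ctype y) (ctype a) < ip (ctype y) (ctype b)"
  unfolding ip_ctype using assms by (intro cos_monotone_0_pi) (auto simp: pi_gt_zero)

section \<open>Order statistics and regions\<close>

lemma ordstat_mono: "mono_on {1..C} (ordstat C x)"
proof (rule mono_onI)
  fix k k' assume "k \<in> {1..C}" "k' \<in> {1..C}" "k \<le> k'"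
  then show "ordstat C x k \<le> ordstat C x k'"
    using sorted_sort[of "map x [0..<C]"] unfolding ordstat_def
    by (subst (asm) sorted_iff_nth_mono) auto
qed

lemma ordstat_strict_mono_on:
  assumes "inj_on x {..<C}"
  shows "strict_mono_on {1..C} (ordstat C x)"
proof (rule strict_mono_onI)
  fix k k' assume "k \<in> {1..C}" "k' \<in> {1..C}" "k < k'"
  moreover have "distinct (map x [0..<C])" using assms by (simp add: distinct_map atLeast_upt)
  then have "sorted_wrt (<) (sort (map x [0..<C]))" by (simp add: strict_sorted_iff)
  ultimately show "ordstat C x k < ordstat C x k'"
    unfolding ordstat_def by (intro sorted_wrt_nth_less[where P="(<)"]) auto
qed

lemma ordstat_image: "ordstat C x ` {1..C} = x ` {..<C}"
proof -
  have "{1..C} = Suc ` {..<C}" by (simp add: image_Suc_lessThan)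
  then have "ordstat C x ` {1..C} = (\<lambda>i. sort (map x [0..<C]) ! i) ` {..<C}"
    by (simp add: image_image ordstat_def)
  also have "\<dots> = set (sort (map x [0..<C]))" by (auto simp: set_conv_nth)
  finally show ?thesis by auto
qed

lemma ordstat_le_iff:
  assumes "1 \<le> k" "k \<le> C"
  shows "ordstat C x k \<le> t \<longleftrightarrow> k \<le> card {j\<in>{..<C}. x j \<le> t}"
proof -
  let ?s = "sort (map x [0..<C])"
  have "card {i\<in>{..<C}. ?s ! i \<le> t} = length (filter (\<lambda>v. v \<le> t) ?s)"
    by (simp add: length_filter_conv_card)
  also have "\<dots> = length (filter (\<lambda>v. v \<le> t) (map x [0..<C]))"
    by (metis mset_filter mset_sort size_mset)
  also have "\<dots> = card {j\<in>{..<C}. x j \<le> t}"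
    by (simp add: length_filter_conv_card) (intro arg_cong[where f=card], auto)
  finally have card_eq: "card {i\<in>{..<C}. ?s ! i \<le> t} = card {j\<in>{..<C}. x j \<le> t}" .
  have sorted: "?s ! i \<le> ?s ! i'" if "i \<le> i'" "i' < C" for i i'
    using that sorted_sort[of "map x [0..<C]"] by (subst (asm) sorted_iff_nth_mono) auto
  show ?thesis
  proof
    assume le: "ordstat C x k \<le> t"
    have "{..<k} \<subseteq> {i\<in>{..<C}. ?s ! i \<le> t}"
    proof
      fix i assume "i \<in> {..<k}"
      then have "?s ! i \<le> ?s ! (k - 1)" using assms by (intro sorted) auto
      then show "i \<in> {i\<in>{..<C}. ?s ! i \<le> t}"
        using le assms \<open>i \<in> {..<k}\<close> by (auto simp: ordstat_def)
    qed
    then have "card {..<k} \<le> card {i\<in>{..<C}. ?s ! i \<le> t}" by (intro card_mono) auto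
    then show "k \<le> card {j\<in>{..<C}. x j \<le> t}" using card_eq by simp
  next
    assume k: "k \<le> card {j\<in>{..<C}. x j \<le> t}"
    show "ordstat C x k \<le> t"
    proof (rule ccontr)
      assume "\<not> ordstat C x k \<le> t"
      then have "{i\<in>{..<C}. ?s ! i \<le> t} \<subseteq> {..<k - 1}"
        using sorted[of "k - 1"] by (auto simp: ordstat_def) (meson dual_order.trans not_less)
      then have "card {i\<in>{..<C}. ?s ! i \<le> t} \<le> k - 1"
        by (metis card_lessThan card_mono finite_lessThan)
      then show False using k card_eq assms by simp
    qed
  qed
qed

definition region_bound :: "nat \<Rightarrow> (nat \<Rightarrow> real) \<Rightarrow> nat \<Rightarrow> real" where
  "region_bound K X i = (X (i - 1) + X (i + K - 1)) / 2"

lemma mem_region_iff: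
  assumes "K < C" "i \<in> {1..C-K+1}"
  shows "y \<in> region C K X i \<longleftrightarrow>
    (if i = 1 then 0 \<le> y else region_bound K X i < y) \<and>
    (if i = C - K + 1 then y \<le> 1 else y \<le> region_bound K X (i + 1))"
  using assms by (auto simp: region_def region_bound_def add.commute)

lemma region_bound_mono:
  assumes "mono_on {1..C} X" "K < C" "2 \<le> k" "k \<le> k'" "k' \<le> C - K + 1"
  shows "region_bound K X k \<le> region_bound K X k'"
proof -
  have "X (k - 1) \<le> X (k' - 1)" "X (k + K - 1) \<le> X (k' + K - 1)"
    using assms by (auto intro!: mono_onD[OF assms(1)])
  then show ?thesis unfolding region_bound_def by simp
qed

lemma region_disjoint:
  assumes "mono_on {1..C} X" "K < C" "i \<in> {1..C-K+1}" "i' \<in> {1..C-K+1}" "i \<noteq> i'"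
  shows "region C K X i \<inter> region C K X i' = {}"
proof -
  have "region C K X i \<inter> region C K X i' = {}"
    if "i \<in> {1..C-K+1}" "i' \<in> {1..C-K+1}" "i < i'" for i i'
  proof -
    have "region_bound K X (i + 1) \<le> region_bound K X i'"
      using that assms(1,2) by (intro region_bound_mono) auto
    then show ?thesis using that assms(2) by (auto simp: mem_region_iff)
  qed
  then show ?thesis using assms(3-5) by (metis Int_commute linorder_neqE_nat)
qed

lemma region_cover:
  assumes "K < C" "y \<in> {0..1}"
  shows "\<exists>i\<in>{1..C-K+1}. y \<in> region C K X i"
proof -
  define A where "A = {k\<in>{1..C-K+1}. k = 1 \<or> region_bound K X k < y}"
  define i where "i = Max A"
  have "finite A" "1 \<in> A" by (auto simp: A_def)
  then have "i \<in> A" and max: "\<And>k. k \<in> A \<Longrightarrow> k \<le> i"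
    unfolding i_def by (auto intro!: Max_in)
  have "i = C - K + 1 \<or> y \<le> region_bound K X (i + 1)"
  proof (rule ccontr)
    assume "\<not> ?thesis"
    then have "i + 1 \<in> A" using \<open>i \<in> A\<close> by (auto simp: A_def)
    then show False using max by fastforce
  qed
  then show ?thesis using \<open>i \<in> A\<close> assms by (auto simp: A_def mem_region_iff intro!: bexI[of _ i])
qed

section \<open>Windows of consecutive ranks\<close>

definition window_cover :: "nat \<Rightarrow> nat \<Rightarrow> (nat \<Rightarrow> nat) \<Rightarrow> nat \<Rightarrow> nat" where
  "window_cover U K \<iota> p = card {l\<in>{..<U}. \<iota> l \<le> p \<and> p \<le> \<iota> l + K - 1}"

lemma window_cover_low:
  fixes \<iota> :: "nat \<Rightarrow> nat"
  assumes "\<And>l. l < U \<Longrightarrow> 1 \<le> \<iota> l" "p \<le> K"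
  shows "window_cover U K \<iota> p = card {l\<in>{..<U}. \<iota> l \<le> p}"
  unfolding window_cover_def using assms by (intro arg_cong[where f=card]) force

lemma window_cover_high:
  fixes \<iota> :: "nat \<Rightarrow> nat"
  assumes "\<And>l. l < U \<Longrightarrow> \<iota> l \<le> C - K + 1" "C \<le> 2 * K" "K < p"
  shows "window_cover U K \<iota> p = card {l\<in>{..<U}. p - K + 1 \<le> \<iota> l}"
  unfolding window_cover_def using assms by (intro arg_cong[where f=card]) force

lemma windows_cover_K_ranks_if:
  fixes \<iota> :: "nat \<Rightarrow> nat"
  assumes \<iota>: "\<And>l. l < U \<Longrightarrow> \<iota> l \<in> {1..C-K+1}" and "K \<le> C" "C \<le> 2 * K"
    and i: "i \<in> {1..C-K+1}" "a \<le> card {l\<in>{..<U}. \<iota> l \<le> i}" "a \<le> card {l\<in>{..<U}. i \<le> \<iota> l}"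
  shows "K \<le> card {p\<in>{1..C}. a \<le> window_cover U K \<iota> p}"
proof -
  have "{i..i+K-1} \<subseteq> {p\<in>{1..C}. a \<le> window_cover U K \<iota> p}"
  proof
    fix p assume p: "p \<in> {i..i+K-1}"
    show "p \<in> {p\<in>{1..C}. a \<le> window_cover U K \<iota> p}"
    proof (cases "p \<le> K")
      case True
      have "card {l\<in>{..<U}. \<iota> l \<le> i} \<le> card {l\<in>{..<U}. \<iota> l \<le> p}"
        using p by (intro card_mono) auto
      then show ?thesis using True p i \<iota> assms(2) window_cover_low[of U \<iota> p K] by auto
    next
      case False
      have "card {l\<in>{..<U}. i \<le> \<iota> l} \<le> card {l\<in>{..<U}. p - K + 1 \<le> \<iota> l}"
        using p False by (intro card_mono) auto
      then show ?thesis
        using False p i \<iota> assms(2,3) window_cover_high[of U \<iota> C K p] by auto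
    qed
  qed
  then have "card {i..i+K-1} \<le> card {p\<in>{1..C}. a \<le> window_cover U K \<iota> p}"
    by (intro card_mono) auto
  then show ?thesis using i by simp
qed

lemma windows_cover_K_ranks_only_if:
  fixes \<iota> :: "nat \<Rightarrow> nat"
  assumes \<iota>: "\<And>l. l < U \<Longrightarrow> \<iota> l \<in> {1..C-K+1}" and "K < C" "C \<le> 2 * K" "0 < a" "a \<le> U"
    and cover: "K \<le> card {p\<in>{1..C}. a \<le> window_cover U K \<iota> p}"
  shows "\<exists>i\<in>{1..C-K+1}. a \<le> card {l\<in>{..<U}. \<iota> l \<le> i} \<and> a \<le> card {l\<in>{..<U}. i \<le> \<iota> l}"
proof (rule ccontr)
  assume none: "\<not> ?thesis"
  define P where "P i = card {l\<in>{..<U}. \<iota> l \<le> i}" for i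
  define S where "S i = card {l\<in>{..<U}. i \<le> \<iota> l}" for i
  have "{l\<in>{..<U}. \<iota> l \<le> 0} = {}" "{l\<in>{..<U}. \<iota> l \<le> C - K + 1} = {..<U}"
    "{l\<in>{..<U}. 1 \<le> \<iota> l} = {..<U}"
    using \<iota> by fastforce+
  then have "P 0 = 0" "P (C - K + 1) = U" "S 1 = U" by (simp_all add: P_def S_def)
  \<comment> \<open>For the first \<open>\<alpha>\<close> with \<open>a \<le> P \<alpha>\<close>, all ranks covered \<open>a\<close> times lie in \<open>\<alpha>..\<alpha>+K-2\<close>.\<close>
  define \<alpha> where "\<alpha> = (LEAST i. a \<le> P i)"
  have \<alpha>: "a \<le> P \<alpha>" "\<alpha> \<le> C - K + 1" "\<And>p. a \<le> P p \<Longrightarrow> \<alpha> \<le> p"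
    unfolding \<alpha>_def using \<open>P (C - K + 1) = U\<close> assms(5) by (auto intro: LeastI Least_le)
  have "\<alpha> \<noteq> 0" using \<alpha>(1) \<open>P 0 = 0\<close> assms(4) by (metis not_le)
  then have "S \<alpha> < a" using none \<alpha>(1,2) by (auto simp: P_def S_def)
  then have "\<alpha> \<ge> 2" using \<open>S 1 = U\<close> \<open>\<alpha> \<noteq> 0\<close> assms(5) by (metis One_nat_def less_2_cases not_less)
  have "{p\<in>{1..C}. a \<le> window_cover U K \<iota> p} \<subseteq> {\<alpha>..K+\<alpha>-2}"
  proof
    fix p assume p: "p \<in> {p\<in>{1..C}. a \<le> window_cover U K \<iota> p}"
    show "p \<in> {\<alpha>..K+\<alpha>-2}"
    proof (cases "p \<le> K")
      case True
      then have "a \<le> P p" using p \<iota> window_cover_low[of U \<iota> p K] by (auto simp: P_def)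
      then show ?thesis using True \<alpha>(3) \<open>\<alpha> \<ge> 2\<close> by auto
    next
      case False
      then have "a \<le> S (p - K + 1)"
        using p \<iota> assms(3) window_cover_high[of U \<iota> C K p] by (auto simp: S_def)
      moreover have "S \<alpha> \<ge> S (p - K + 1)" if "\<alpha> \<le> p - K + 1"
        unfolding S_def using that by (intro card_mono) auto
      ultimately have "p - K + 1 < \<alpha>" using \<open>S \<alpha> < a\<close> by (meson leD leI order_trans)
      then show ?thesis using False \<alpha>(2) assms(3) by auto
    qed
  qed
  then have "card {p\<in>{1..C}. a \<le> window_cover U K \<iota> p} \<le> K - 1"
    using card_mono[of "{\<alpha>..K+\<alpha>-2}"] \<open>\<alpha> \<ge> 2\<close> by fastforce
  then show False using cover assms(2,3) by linarith
qed

lemma windows_cover_K_ranks_iff: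
  fixes \<iota> :: "nat \<Rightarrow> nat"
  assumes \<iota>: "\<And>l. l < U \<Longrightarrow> \<iota> l \<in> {1..C-K+1}" and "K < C" "C \<le> 2 * K" "0 < a" "a \<le> U"
  shows "K \<le> card {p\<in>{1..C}. a \<le> window_cover U K \<iota> p} \<longleftrightarrow>
    (\<exists>i\<in>{1..C-K+1}. a \<le> card {l\<in>{..<U}. \<iota> l \<le> i} \<and> a \<le> card {l\<in>{..<U}. i \<le> \<iota> l})"
proof
  assume "K \<le> card {p\<in>{1..C}. a \<le> window_cover U K \<iota> p}"
  then show "\<exists>i\<in>{1..C-K+1}. a \<le> card {l\<in>{..<U}. \<iota> l \<le> i} \<and> a \<le> card {l\<in>{..<U}. i \<le> \<iota> l}"
    using windows_cover_K_ranks_only_if[where \<iota> = \<iota>, OF \<iota> assms(2-5)] by blast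
next
  assume "\<exists>i\<in>{1..C-K+1}. a \<le> card {l\<in>{..<U}. \<iota> l \<le> i} \<and> a \<le> card {l\<in>{..<U}. i \<le> \<iota> l}"
  then obtain i where i: "i \<in> {1..C-K+1}" "a \<le> card {l\<in>{..<U}. \<iota> l \<le> i}"
    "a \<le> card {l\<in>{..<U}. i \<le> \<iota> l}"
    by blast
  show "K \<le> card {p\<in>{1..C}. a \<le> window_cover U K \<iota> p}"
    by (rule windows_cover_K_ranks_if[where \<iota> = \<iota>, OF \<iota> less_imp_le[OF assms(2)] assms(3) i])
qed

section \<open>Recommendations in general position\<close>

(* The open interval keeps all inner products positive, so optimal sets use all K slots;
  avoiding midpoints makes the K nearest creators unique. *)
definition general_position :: "nat \<Rightarrow> nat \<Rightarrow> (nat \<Rightarrow> real) \<Rightarrow> (nat \<Rightarrow> real) \<Rightarrow> bool" where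
  "general_position U C y x \<longleftrightarrow> (\<forall>j<C. x j \<in> {0..1}) \<and> inj_on x {..<C} \<and>
     (\<forall>l<U. y l \<in> {0<..<1}) \<and> (\<forall>l<U. \<forall>j<C. \<forall>j'<C. j \<noteq> j' \<longrightarrow> 2 * y l \<noteq> x j + x j')"

definition creator_at_rank :: "nat \<Rightarrow> (nat \<Rightarrow> real) \<Rightarrow> nat \<Rightarrow> nat" where
  "creator_at_rank C x p = the_inv_into {..<C} x (ordstat C x p)"

definition user_region :: "nat \<Rightarrow> nat \<Rightarrow> (nat \<Rightarrow> real) \<Rightarrow> (nat \<Rightarrow> real) \<Rightarrow> nat \<Rightarrow> nat" where
  "user_region C K y x l = (THE i. i \<in> {1..C-K+1} \<and> y l \<in> region C K (ordstat C x) i)"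

definition nearest_creators :: "nat \<Rightarrow> nat \<Rightarrow> (nat \<Rightarrow> real) \<Rightarrow> (nat \<Rightarrow> real) \<Rightarrow> nat \<Rightarrow> nat set" where
  "nearest_creators C K y x l =
     creator_at_rank C x ` {user_region C K y x l..user_region C K y x l + K - 1}"

context
  fixes U C K :: nat and y x :: "nat \<Rightarrow> real"
  assumes gp: "general_position U C y x" and K: "0 < K" "K < C"
begin

lemma inj_on_creator_types: "inj_on x {..<C}"
  using gp by (simp add: general_position_def)

lemma creator_at_rank_bij: "bij_betw (creator_at_rank C x) {1..C} {..<C}"
proof -
  have "bij_betw (ordstat C x) {1..C} (x ` {..<C})"
    using strict_mono_on_imp_inj_on[OF ordstat_strict_mono_on[OF inj_on_creator_types]] ordstat_image
    unfolding bij_betw_def by auto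
  moreover have "bij_betw (the_inv_into {..<C} x) (x ` {..<C}) {..<C}"
    using inj_on_creator_types by (intro bij_betw_the_inv_into) (simp add: bij_betw_def)
  ultimately show ?thesis
    using bij_betw_trans unfolding creator_at_rank_def comp_def by blast
qed

lemma x_creator_at_rank: "p \<in> {1..C} \<Longrightarrow> x (creator_at_rank C x p) = ordstat C x p"
  using inj_on_creator_types ordstat_image[of C x] unfolding creator_at_rank_def
  by (intro f_the_inv_into_f) auto

lemma user_region_spec:
  assumes "l < U"
  shows "user_region C K y x l \<in> {1..C-K+1}"
    and "y l \<in> region C K (ordstat C x) (user_region C K y x l)"
proof -
  have "y l \<in> {0..1}" using gp assms by (auto simp: general_position_def)
  then have "\<exists>!i. i \<in> {1..C-K+1} \<and> y l \<in> region C K (ordstat C x) i"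
    using region_cover[OF K(2)] region_disjoint[OF ordstat_mono K(2)] by blast
  then show "user_region C K y x l \<in> {1..C-K+1}"
    and "y l \<in> region C K (ordstat C x) (user_region C K y x l)"
    unfolding user_region_def by (metis (no_types, lifting) theI')+
qed

lemma mem_region_iff_user_region:
  assumes "l < U" "i \<in> {1..C-K+1}"
  shows "y l \<in> region C K (ordstat C x) i \<longleftrightarrow> user_region C K y x l = i"
  using user_region_spec[OF assms(1)] region_disjoint[OF ordstat_mono K(2) assms(2)] by blast

lemma user_ne_region_bound:
  assumes "l < U" "k \<in> {2..C-K+1}"
  shows "y l \<noteq> region_bound K (ordstat C x) k"
proof
  assume eq: "y l = region_bound K (ordstat C x) k"
  have ranks: "k - 1 \<in> {1..C}" "k + K - 1 \<in> {1..C}" "k - 1 \<noteq> k + K - 1" using assms K by auto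
  then have "creator_at_rank C x (k - 1) \<noteq> creator_at_rank C x (k + K - 1)"
    "creator_at_rank C x (k - 1) < C" "creator_at_rank C x (k + K - 1) < C"
    using creator_at_rank_bij unfolding bij_betw_def inj_on_def by blast+
  moreover have "2 * y l = x (creator_at_rank C x (k - 1)) + x (creator_at_rank C x (k + K - 1))"
    using eq ranks by (simp add: x_creator_at_rank region_bound_def)
  ultimately show False using gp assms(1) unfolding general_position_def by blast
qed

lemma closer_in_window:
  assumes l: "l < U" and "p \<in> {1..C}" "q \<in> {1..C}"
    and "q \<in> {user_region C K y x l..user_region C K y x l + K - 1}"
    and "p \<notin> {user_region C K y x l..user_region C K y x l + K - 1}"
  shows "\<bar>y l - ordstat C x q\<bar> < \<bar>y l - ordstat C x p\<bar>"
proof -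
  define i where "i = user_region C K y x l"
  define X where "X = ordstat C x"
  have i: "i \<in> {1..C-K+1}" and y: "y l \<in> region C K X i"
    using user_region_spec[OF l] by (auto simp: i_def X_def)
  have mono: "X k \<le> X k'" if "1 \<le> k" "k \<le> k'" "k' \<le> C" for k k'
    using that unfolding X_def by (intro mono_onD[OF ordstat_mono]) auto
  have strict: "X k < X k'" if "1 \<le> k" "k < k'" "k' \<le> C" for k k'
    using that ordstat_strict_mono_on[OF inj_on_creator_types] unfolding X_def
    by (auto intro: strict_mono_onD)
  consider "p < i" | "i + K - 1 < p" using assms(5) by (force simp: i_def)
  then show ?thesis
  proof cases
    case 1
    then have "region_bound K X i < y l" using y i K assms(2) by (auto simp: mem_region_iff)
    moreover have "X p \<le> X (i - 1)" "X q \<le> X (i + K - 1)" "X p < X q"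
      using 1 i K assms(2-4) by (auto simp: i_def intro!: mono strict)
    ultimately show ?thesis unfolding X_def region_bound_def by (simp add: abs_if)
  next
    case 2
    then have "i + 1 \<in> {2..C-K+1}" using i assms(2) by auto
    then have "y l < region_bound K X (i + 1)"
      using y i K user_ne_region_bound[OF l, of "i + 1"] by (auto simp: mem_region_iff X_def)
    moreover have "X (i + K) \<le> X p" "X i \<le> X q" "X q < X p"
      using 2 i K assms(2-4) by (auto simp: i_def intro!: mono strict)
    ultimately show ?thesis unfolding X_def region_bound_def by (simp add: abs_if)
  qed
qed

lemma rank_window_subset:
  "l < U \<Longrightarrow> {user_region C K y x l..user_region C K y x l + K - 1} \<subseteq> {1..C}"
  using user_region_spec(1)[of l] K by auto

lemma nearest_creators_subset: "l < U \<Longrightarrow> nearest_creators C K y x l \<subseteq> {..<C}"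
  using creator_at_rank_bij rank_window_subset[of l]
  unfolding nearest_creators_def bij_betw_def by blast

lemma card_nearest_creators: "l < U \<Longrightarrow> card (nearest_creators C K y x l) = K"
proof -
  assume l: "l < U"
  let ?W = "{user_region C K y x l..user_region C K y x l + K - 1}"
  have "inj_on (creator_at_rank C x) ?W"
    using creator_at_rank_bij rank_window_subset[OF l]
    unfolding bij_betw_def by (blast intro: inj_on_subset)
  then show ?thesis using user_region_spec(1)[OF l] K by (simp add: nearest_creators_def card_image)
qed

lemma sum_less_nearest_creators:
  assumes l: "l < U" and T: "T \<subseteq> {..<C}" "card T \<le> K" "T \<noteq> nearest_creators C K y x l"
  shows "(\<Sum>j\<in>T. ip (ctype (y l)) (ctype (x j)))
    < (\<Sum>j\<in>nearest_creators C K y x l. ip (ctype (y l)) (ctype (x j)))"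
proof (rule sum_less_sum_dominating_set[OF _ nearest_creators_subset[OF l] T(1) _ T(3)])
  have dist: "\<bar>y l - x j\<bar> < 1" if "j < C" for j
    using gp l that by (fastforce simp: general_position_def)
  show "0 < ip (ctype (y l)) (ctype (x b))" if "b \<in> nearest_creators C K y x l" for b
    using that nearest_creators_subset[OF l] by (intro ip_ctype_pos dist) auto
  show "ip (ctype (y l)) (ctype (x a)) < ip (ctype (y l)) (ctype (x b))"
    if a: "a \<in> {..<C} - nearest_creators C K y x l" and b: "b \<in> nearest_creators C K y x l" for a b
  proof -
    obtain q where q: "q \<in> {user_region C K y x l..user_region C K y x l + K - 1}" "b = creator_at_rank C x q"
      using b by (auto simp: nearest_creators_def)
    have "q \<in> {1..C}" using q(1) rank_window_subset[OF l] by auto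
    have "a \<in> creator_at_rank C x ` {1..C}" using a creator_at_rank_bij by (simp add: bij_betw_def)
    then obtain p where p: "p \<in> {1..C}" "a = creator_at_rank C x p" by auto
    then have "p \<notin> {user_region C K y x l..user_region C K y x l + K - 1}"
      using a by (auto simp: nearest_creators_def)
    then have "\<bar>y l - x b\<bar> < \<bar>y l - x a\<bar>"
      using closer_in_window[OF l p(1) \<open>q \<in> {1..C}\<close> q(1)] p q \<open>q \<in> {1..C}\<close>
      by (simp add: x_creator_at_rank)
    then show ?thesis using a dist by (intro ip_ctype_less) (auto intro: less_imp_le)
  qed
qed (use card_nearest_creators[OF l] T(2) in auto)

lemma is_UC0_iff_nearest_creators:
  "is_UC0 U C K y x S \<longleftrightarrow> (\<forall>l<U. S l = nearest_creators C K y x l)"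
proof
  assume UC0: "is_UC0 U C K y x S"
  show "\<forall>l<U. S l = nearest_creators C K y x l"
  proof (intro allI impI)
    fix l assume l: "l < U"
    then have S: "S l \<subseteq> {..<C}" "card (S l) \<le> K"
      and opt: "(\<Sum>j\<in>nearest_creators C K y x l. ip (ctype (y l)) (ctype (x j)))
                  \<le> (\<Sum>j\<in>S l. ip (ctype (y l)) (ctype (x j)))"
      using UC0 nearest_creators_subset card_nearest_creators unfolding is_UC0_def by auto
    show "S l = nearest_creators C K y x l"
    proof (rule ccontr)
      assume "S l \<noteq> nearest_creators C K y x l"
      from sum_less_nearest_creators[OF l S this] opt show False by simp
    qed
  qed
next
  assume S: "\<forall>l<U. S l = nearest_creators C K y x l"
  show "is_UC0 U C K y x S"
    unfolding is_UC0_def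
  proof (intro allI impI conjI)
    fix l assume l: "l < U"
    then show "S l \<subseteq> {..<C}" "card (S l) \<le> K"
      using S nearest_creators_subset card_nearest_creators by auto
    fix T assume T: "T \<subseteq> {..<C}" "card T \<le> K"
    show "(\<Sum>j\<in>T. ip (ctype (y l)) (ctype (x j))) \<le> (\<Sum>j\<in>S l. ip (ctype (y l)) (ctype (x j)))"
      using sum_less_nearest_creators[OF l T] S l by (cases "T = S l") auto
  qed
qed

lemma num_stay_nearest_creators:
  assumes S: "\<forall>l<U. S l = nearest_creators C K y x l"
  shows "num_stay U C abar S = card {p\<in>{1..C}. abar \<le> window_cover U K (user_region C K y x) p}"
proof -
  let ?cover = "\<lambda>p. {l\<in>{..<U}. user_region C K y x l \<le> p \<and> p \<le> user_region C K y x l + K - 1}"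
  have inj: "inj_on (creator_at_rank C x) {1..C}"
    using creator_at_rank_bij by (simp add: bij_betw_def)
  have users: "{l\<in>{..<U}. creator_at_rank C x p \<in> S l} = ?cover p" if p: "p \<in> {1..C}" for p
  proof -
    have "creator_at_rank C x p \<in> S l \<longleftrightarrow> user_region C K y x l \<le> p \<and> p \<le> user_region C K y x l + K - 1"
      if l: "l < U" for l
      using S l p inj rank_window_subset[OF l] by (auto simp: nearest_creators_def inj_on_image_mem_iff)
    then show ?thesis by auto
  qed
  have "{j\<in>{..<C}. abar \<le> card {l\<in>{..<U}. j \<in> S l}} =
        creator_at_rank C x ` {p\<in>{1..C}. abar \<le> card (?cover p)}"
  proof (intro set_eqI iffI)
    fix j assume j: "j \<in> {j\<in>{..<C}. abar \<le> card {l\<in>{..<U}. j \<in> S l}}"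
    then have "j \<in> creator_at_rank C x ` {1..C}"
      using creator_at_rank_bij by (simp add: bij_betw_def)
    then obtain p where "p \<in> {1..C}" "j = creator_at_rank C x p" by auto
    then show "j \<in> creator_at_rank C x ` {p\<in>{1..C}. abar \<le> card (?cover p)}"
      using j users by auto
  next
    fix j assume "j \<in> creator_at_rank C x ` {p\<in>{1..C}. abar \<le> card (?cover p)}"
    then show "j \<in> {j\<in>{..<C}. abar \<le> card {l\<in>{..<U}. j \<in> S l}}"
      using creator_at_rank_bij users by (auto simp: bij_betw_def)
  qed
  then have "num_stay U C abar S = card (creator_at_rank C x ` {p\<in>{1..C}. abar \<le> card (?cover p)})"
    by (simp add: num_stay_def)
  also have "\<dots> = card {p\<in>{1..C}. abar \<le> card (?cover p)}"
    by (rule card_image, rule inj_on_subset[OF inj]) auto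
  finally show ?thesis unfolding window_cover_def .
qed

lemma all_UC0_stay_iff:
  "(\<forall>S. is_UC0 U C K y x S \<longrightarrow> K \<le> num_stay U C abar S) \<longleftrightarrow>
   K \<le> card {p\<in>{1..C}. abar \<le> window_cover U K (user_region C K y x) p}"
  using is_UC0_iff_nearest_creators num_stay_nearest_creators by auto

lemma sum_Ucount:
  assumes "J \<subseteq> {1..C-K+1}"
  shows "(\<Sum>j\<in>J. Ucount U C K y x j) = card {l\<in>{..<U}. user_region C K y x l \<in> J}"
proof -
  have "finite J" using assms finite_subset by blast
  have "(\<Sum>j\<in>J. Ucount U C K y x j) = (\<Sum>j\<in>J. card {l\<in>{..<U}. user_region C K y x l = j})"
    using assms mem_region_iff_user_region unfolding Ucount_def
    by (intro sum.cong refl arg_cong[where f=card]) auto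
  also have "\<dots> = card (\<Union>j\<in>J. {l\<in>{..<U}. user_region C K y x l = j})"
    using \<open>finite J\<close> by (intro card_UN_disjoint[symmetric]) auto
  also have "(\<Union>j\<in>J. {l\<in>{..<U}. user_region C K y x l = j}) = {l\<in>{..<U}. user_region C K y x l \<in> J}"
    by auto
  finally show ?thesis .
qed

end

lemma all_UC0_stay_iff_window:
  assumes gp: "general_position U C y x" and "0 < r" "U = r * C" "K < C" "C < 2 * K"
  shows "(\<forall>S. is_UC0 U C K y x S \<longrightarrow> K \<le> num_stay U C (r * K) S) \<longleftrightarrow>
    (\<exists>i\<in>{1..C-K+1}. r * K \<le> (\<Sum>j = 1..i. Ucount U C K y x j) \<and>
                      r * K \<le> (\<Sum>j = i..C-K+1. Ucount U C K y x j))"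
proof -
  have K: "0 < K" "K < C" using assms by linarith+
  have region: "\<And>l. l < U \<Longrightarrow> user_region C K y x l \<in> {1..C-K+1}"
    by (rule user_region_spec(1)[OF gp K])
  have "{l\<in>{..<U}. user_region C K y x l \<in> {1..i}} = {l\<in>{..<U}. user_region C K y x l \<le> i}"
    "{l\<in>{..<U}. user_region C K y x l \<in> {i..C-K+1}} = {l\<in>{..<U}. i \<le> user_region C K y x l}" for i
    using region by fastforce+
  then have sums: "(\<Sum>j = 1..i. Ucount U C K y x j) = card {l\<in>{..<U}. user_region C K y x l \<le> i}"
    "(\<Sum>j = i..C-K+1. Ucount U C K y x j) = card {l\<in>{..<U}. i \<le> user_region C K y x l}"
    if "i \<in> {1..C-K+1}" for i
    using that sum_Ucount[OF gp K, of "{1..i}"] sum_Ucount[OF gp K, of "{i..C-K+1}"] by auto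
  have bounds: "0 < r * K" "r * K \<le> U" "C \<le> 2 * K" using assms by auto
  have "K \<le> card {p\<in>{1..C}. r * K \<le> window_cover U K (user_region C K y x) p} \<longleftrightarrow>
      (\<exists>i\<in>{1..C-K+1}. r * K \<le> card {l\<in>{..<U}. user_region C K y x l \<le> i} \<and>
                        r * K \<le> card {l\<in>{..<U}. i \<le> user_region C K y x l})"
    by (rule windows_cover_K_ranks_iff[where \<iota> = "user_region C K y x", OF region K(2) bounds(3,1,2)])
  also have "\<dots> \<longleftrightarrow> (\<exists>i\<in>{1..C-K+1}. r * K \<le> (\<Sum>j = 1..i. Ucount U C K y x j) \<and>
                                    r * K \<le> (\<Sum>j = i..C-K+1. Ucount U C K y x j))"
    using sums by (intro bex_cong) simp_all
  finally show ?thesis unfolding all_UC0_stay_iff[OF gp K] .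
qed

lemma sum_Ucount_le:
  assumes "J \<subseteq> {1..C-K+1}" "K < C"
  shows "(\<Sum>j\<in>J. Ucount U C K y x j) \<le> U"
proof -
  let ?users = "\<lambda>j. {l\<in>{..<U}. y l \<in> region C K (ordstat C x) j}"
  have "finite J" using assms(1) finite_subset by blast
  have "?users i \<inter> ?users j = {}" if "i \<in> J" "j \<in> J" "i \<noteq> j" for i j
  proof -
    have "region C K (ordstat C x) i \<inter> region C K (ordstat C x) j = {}"
      using that assms by (intro region_disjoint[OF ordstat_mono]) auto
    then show ?thesis by auto
  qed
  then have "(\<Sum>j\<in>J. Ucount U C K y x j) = card (\<Union>j\<in>J. ?users j)"
    unfolding Ucount_def using \<open>finite J\<close> by (intro card_UN_disjoint[symmetric]) auto
  also have "\<dots> \<le> card {..<U}" by (intro card_mono) auto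
  finally show ?thesis by simp
qed

lemma ratio_ge_iff:
  fixes a r C K :: nat
  assumes "0 < r" "0 < C"
  shows "real K / real C \<le> real a / real (r * C) \<longleftrightarrow> r * K \<le> a"
  using assms by (simp add: field_simps flip: of_nat_mult)

definition stay_event :: "nat \<Rightarrow> nat \<Rightarrow> nat \<Rightarrow> nat \<Rightarrow> ((nat \<Rightarrow> real) \<times> (nat \<Rightarrow> real)) set" where
  "stay_event U C K abar = {\<omega> \<in> space (model U C).
     \<forall>S. is_UC0 U C K (fst \<omega>) (snd \<omega>) S \<longrightarrow> K \<le> num_stay U C abar S}"

definition window_event ::
    "nat \<Rightarrow> nat \<Rightarrow> nat \<Rightarrow> nat \<Rightarrow> nat \<Rightarrow> ((nat \<Rightarrow> real) \<times> (nat \<Rightarrow> real)) set" where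
  "window_event r U C K i = {\<omega> \<in> space (model U C).
     real (\<Sum>j = 1..i. Ucount U C K (fst \<omega>) (snd \<omega>) j) / real (r * C) \<ge> real K / real C \<and>
     real (\<Sum>j = i..C - K + 1. Ucount U C K (fst \<omega>) (snd \<omega>) j) / real (r * C) \<ge> real K / real C}"

lemma mem_window_event_iff:
  assumes "0 < r" "0 < C"
  shows "\<omega> \<in> window_event r U C K i \<longleftrightarrow> \<omega> \<in> space (model U C) \<and>
    r * K \<le> (\<Sum>j = 1..i. Ucount U C K (fst \<omega>) (snd \<omega>) j) \<and>
    r * K \<le> (\<Sum>j = i..C - K + 1. Ucount U C K (fst \<omega>) (snd \<omega>) j)"
  unfolding window_event_def ratio_ge_iff[OF assms] by simp

lemma disjoint_window_events:
  assumes "0 < r" "U = r * C" "K < C" "C < 2 * K"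
  shows "disjoint_family_on (window_event r U C K) {1..C-K+1}"
proof -
  have "window_event r U C K i \<inter> window_event r U C K i' = {}"
    if "i < i'" "i' \<le> C - K + 1" for i i'
  proof (rule equals0I)
    fix \<omega> assume \<omega>: "\<omega> \<in> window_event r U C K i \<inter> window_event r U C K i'"
    let ?u = "Ucount U C K (fst \<omega>) (snd \<omega>)"
    have "r * K + r * K \<le> (\<Sum>j = 1..i. ?u j) + (\<Sum>j = i'..C-K+1. ?u j)"
      using \<omega> mem_window_event_iff[of r C] assms by auto
    also have "\<dots> = (\<Sum>j \<in> {1..i} \<union> {i'..C-K+1}. ?u j)"
      using that by (intro sum.union_disjoint[symmetric]) auto
    also have "\<dots> \<le> U"
      using that assms(3) by (intro sum_Ucount_le) auto
    also have "U < r * K + r * K"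
    proof -
      have "r * C < r * (2 * K)" using assms by simp
      then show ?thesis using assms(2) by (simp only: mult_2 distrib_left)
    qed
    finally show False by simp
  qed
  then show ?thesis
    unfolding disjoint_family_on_def by (metis Int_commute atLeastAtMost_iff linorder_neqE_nat)
qed

section \<open>General position is almost sure\<close>

lemma prob_space_unif01: "prob_space unif01"
  unfolding unif01_def by (rule prob_space_uniform_measure) auto

lemma sets_unif01 [simp, measurable_cong]: "sets unif01 = sets borel"
  by (simp add: unif01_def)

lemma space_unif01 [simp]: "space unif01 = UNIV"
  by (simp add: unif01_def)

lemma emeasure_unif01_eq_0:
  "A \<in> sets borel \<Longrightarrow> emeasure lborel (A \<inter> {0..1}) = 0 \<Longrightarrow> emeasure unif01 A = 0"
  by (simp add: unif01_def Int_commute)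

lemma emeasure_unif01_singleton: "emeasure unif01 {c} = 0"
  by (rule emeasure_unif01_eq_0) (auto intro!: emeasure_lborel_countable)

lemma prob_space_model: "prob_space (model U C)"
  unfolding model_def by (intro prob_space_pair prob_space_PiM prob_space_unif01)

interpretation unif01_product: product_prob_space "\<lambda>_::nat. unif01" I for I
  by (simp add: product_prob_space_def product_sigma_finite_def product_prob_space_axioms_def
      prob_space_imp_sigma_finite prob_space_unif01)

interpretation model_pair: pair_sigma_finite "PiM {..<U} (\<lambda>_. unif01)" "PiM {..<C} (\<lambda>_. unif01)" for U C
  by (simp add: pair_sigma_finite_def prob_space_imp_sigma_finite prob_space_PiM prob_space_unif01)

lemma AE_PiM_unif01_notin:
  fixes I :: "nat set"
  assumes "i \<in> I" "A \<in> sets borel" "emeasure unif01 A = 0"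
  shows "AE f in PiM I (\<lambda>_. unif01). f i \<notin> A"
proof (rule AE_I')
  show "{f\<in>space (PiM I (\<lambda>_. unif01)). f i \<in> A} \<in> null_sets (PiM I (\<lambda>_. unif01))"
    using unif01_product.emeasure_PiM_Collect_single[of i I A] assms by (auto simp: null_sets_def)
qed auto

lemma AE_PiM_unif01_distinct:
  fixes I :: "nat set"
  assumes "finite I" "j \<in> I" "j' \<in> I" "j \<noteq> j'"
  shows "AE f in PiM I (\<lambda>_. unif01). f j \<noteq> f j'"
proof (rule AE_I')
  \<comment> \<open>Integrating out coordinate \<open>j\<close> first, each section of the diagonal is a single point.\<close>
  let ?S = "{f\<in>space (PiM I (\<lambda>_. unif01)). f j = f j'}"
  have I: "I = insert j (I - {j})" using assms by auto
  have S: "?S \<in> sets (PiM I (\<lambda>_. unif01))" using assms by measurable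
  have "emeasure (PiM I (\<lambda>_. unif01)) ?S
      = (\<integral>\<^sup>+ f. indicator ?S f \<partial>PiM (insert j (I - {j})) (\<lambda>_. unif01))"
    using S I by simp
  also have "\<dots> = (\<integral>\<^sup>+ g. \<integral>\<^sup>+ t. indicator ?S (g(j := t)) \<partial>unif01 \<partial>PiM (I - {j}) (\<lambda>_. unif01))"
    using assms S I by (intro unif01_product.product_nn_integral_insert) (auto simp del: insert_Diff_single)
  also have "\<dots> = (\<integral>\<^sup>+ g. 0 \<partial>PiM (I - {j}) (\<lambda>_. unif01))"
  proof (rule nn_integral_cong)
    fix g assume g: "g \<in> space (PiM (I - {j}) (\<lambda>_. unif01))"
    have "indicator ?S (g(j := t)) = (indicator {g j'} t :: ennreal)" for t
    proof -
      have "g(j := t) \<in> space (PiM I (\<lambda>_. unif01))"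
        using g assms by (auto simp: space_PiM PiE_def extensional_def)
      then show ?thesis using assms by (auto simp: indicator_def)
    qed
    then show "(\<integral>\<^sup>+ t. indicator ?S (g(j := t)) \<partial>unif01) = 0"
      by (simp add: emeasure_unif01_singleton)
  qed
  finally show "?S \<in> null_sets (PiM I (\<lambda>_. unif01))" using S by (simp add: null_sets_def)
qed auto

lemma AE_model_creators:
  assumes "{\<omega> \<in> space (model U C). P (snd \<omega>)} \<in> sets (model U C)"
    and "AE x in PiM {..<C} (\<lambda>_. unif01). P x"
  shows "AE \<omega> in model U C. P (snd \<omega>)"
  using assms unfolding model_def by (intro model_pair.AE_pair_measure) simp_all

lemma AE_model_users:
  assumes "{\<omega> \<in> space (model U C). P (fst \<omega>) (snd \<omega>)} \<in> sets (model U C)"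
    and "\<And>x. AE y in PiM {..<U} (\<lambda>_. unif01). P y x"
  shows "AE \<omega> in model U C. P (fst \<omega>) (snd \<omega>)"
proof -
  have "AE y in PiM {..<U} (\<lambda>_. unif01). AE x in PiM {..<C} (\<lambda>_. unif01). P y x"
    using model_pair.AE_commute[OF assms(1)[unfolded model_def]] assms(2) by (auto intro: AE_I2)
  then show ?thesis
    using assms(1) unfolding model_def by (intro model_pair.AE_pair_measure) simp_all
qed

lemma AE_general_position: "AE \<omega> in model U C. general_position U C (fst \<omega>) (snd \<omega>)"
proof -
  have range_x: "AE \<omega> in model U C. snd \<omega> j \<in> {0..1}" if "j < C" for j
  proof (rule AE_model_creators)
    have "emeasure unif01 (- {0..1}) = 0" by (rule emeasure_unif01_eq_0) auto
    then show "AE x in PiM {..<C} (\<lambda>_. unif01). x j \<in> {0..1}"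
      using AE_PiM_unif01_notin[of j "{..<C}" "- {0..1}"] that by simp
  qed (unfold model_def, insert that, measurable)
  have distinct_x: "AE \<omega> in model U C. snd \<omega> j \<noteq> snd \<omega> j'" if "j < C" "j' < C" "j \<noteq> j'" for j j'
  proof (rule AE_model_creators)
    show "AE x in PiM {..<C} (\<lambda>_. unif01). x j \<noteq> x j'"
      using that by (intro AE_PiM_unif01_distinct) auto
  qed (unfold model_def, intro borel_measurable_neq, insert that, measurable)
  have range_y: "AE \<omega> in model U C. fst \<omega> l \<in> {0<..<1}" if "l < U" for l
  proof (rule AE_model_users[where P = "\<lambda>y x. y l \<in> {0<..<1}"])
    have "- {0<..<1} \<inter> {0..1::real} = {0, 1}" by auto
    then have "emeasure unif01 (- {0<..<1}) = 0"
      by (intro emeasure_unif01_eq_0) (auto intro!: emeasure_lborel_countable)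
    then show "AE y in PiM {..<U} (\<lambda>_. unif01). y l \<in> {0<..<1}" for x
      using AE_PiM_unif01_notin[of l "{..<U}" "- {0<..<1}"] that by simp
  qed (unfold model_def, insert that, measurable)
  have midpoint_y: "AE \<omega> in model U C. 2 * fst \<omega> l \<noteq> snd \<omega> j + snd \<omega> j'"
    if "l < U" "j < C" "j' < C" for l j j'
  proof (rule AE_model_users[where P = "\<lambda>y x. 2 * y l \<noteq> x j + x j'"])
    fix x
    have "AE y in PiM {..<U} (\<lambda>_. unif01). y l \<notin> {(x j + x j') / 2}"
      using that by (intro AE_PiM_unif01_notin) (auto simp: emeasure_unif01_singleton)
    then show "AE y in PiM {..<U} (\<lambda>_. unif01). 2 * y l \<noteq> x j + x j'"
      by eventually_elim auto
  qed (unfold model_def, intro borel_measurable_neq, insert that, measurable)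
  have "AE \<omega> in model U C. (\<forall>j\<in>{..<C}. snd \<omega> j \<in> {0..1}) \<and>
      (\<forall>j\<in>{..<C}. \<forall>j'\<in>{..<C}. j \<noteq> j' \<longrightarrow> snd \<omega> j \<noteq> snd \<omega> j') \<and>
      (\<forall>l\<in>{..<U}. fst \<omega> l \<in> {0<..<1}) \<and>
      (\<forall>l\<in>{..<U}. \<forall>j\<in>{..<C}. \<forall>j'\<in>{..<C}. 2 * fst \<omega> l \<noteq> snd \<omega> j + snd \<omega> j')"
    using range_x distinct_x range_y midpoint_y
    by (intro AE_conjI AE_finite_allI finite_lessThan) (auto intro: AE_I2)
  then show ?thesis
    unfolding general_position_def inj_on_def by eventually_elim auto
qed

lemma ordstat_le_iff_subset:
  assumes "1 \<le> k" "k \<le> C"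
  shows "ordstat C x k \<le> t \<longleftrightarrow> (\<exists>T\<in>Pow {..<C}. k \<le> card T \<and> (\<forall>j\<in>T. x j \<le> t))"
proof -
  have "(\<exists>T\<in>Pow {..<C}. k \<le> card T \<and> (\<forall>j\<in>T. x j \<le> t)) \<longleftrightarrow> k \<le> card {j\<in>{..<C}. x j \<le> t}"
  proof
    assume "\<exists>T\<in>Pow {..<C}. k \<le> card T \<and> (\<forall>j\<in>T. x j \<le> t)"
    then obtain T where T: "T \<subseteq> {..<C}" "k \<le> card T" "\<forall>j\<in>T. x j \<le> t" by auto
    then have "card T \<le> card {j\<in>{..<C}. x j \<le> t}" by (intro card_mono) auto
    with T(2) show "k \<le> card {j\<in>{..<C}. x j \<le> t}" by simp
  next
    assume "k \<le> card {j\<in>{..<C}. x j \<le> t}"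
    then show "\<exists>T\<in>Pow {..<C}. k \<le> card T \<and> (\<forall>j\<in>T. x j \<le> t)"
      by (intro bexI[of _ "{j\<in>{..<C}. x j \<le> t}"]) auto
  qed
  then show ?thesis using ordstat_le_iff[OF assms] by simp
qed

section \<open>Measurability\<close>

(* Beyond C the order statistic reads past the end of the sorted list, a junk value that
  does not depend on x. *)
lemma ordstat_beyond:
  assumes "C \<le> k - 1"
  shows "ordstat C x k = [] ! (k - 1 - C)"
proof -
  have "k - 1 = length (sort (map x [0..<C])) + (k - 1 - C)" using assms by simp
  then show ?thesis unfolding ordstat_def by (metis append_Nil2 nth_append_length_plus)
qed

lemma borel_measurable_ordstat [measurable]:
  "(\<lambda>x. ordstat C x k) \<in> borel_measurable (PiM {..<C} (\<lambda>_. unif01))"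
proof (cases "C \<le> k - 1")
  case True
  then show ?thesis by (simp add: ordstat_beyond)
next
  case False
  \<comment> \<open>\<open>k' = k\<close> unless \<open>k = 0\<close>, which reads the same entry as \<open>k = 1\<close>.\<close>
  define k' where "k' = Suc (k - 1)"
  have k': "1 \<le> k'" "k' \<le> C" "\<And>x. ordstat C x k = ordstat C x k'"
    using False by (auto simp: k'_def ordstat_def)
  show ?thesis
  proof (rule borel_measurableI_le)
    fix t
    let ?M = "PiM {..<C} (\<lambda>_. unif01)"
    have le_iff: "ordstat C x k \<le> t \<longleftrightarrow> (\<exists>T\<in>Pow {..<C}. k' \<le> card T \<and> (\<forall>j\<in>T. x j \<le> t))" for x
      using ordstat_le_iff_subset[OF k'(1,2)] k'(3) by simp
    have "Measurable.pred ?M (\<lambda>x. \<exists>T\<in>Pow {..<C}. k' \<le> card T \<and> (\<forall>j\<in>T. x j \<le> t))"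
    proof (intro pred_intros_finite(4) pred_intros_conj1' pred_intros_finite(3) finite_Pow_iff[THEN iffD2])
      fix T j assume "T \<in> Pow {..<C}" "j \<in> T"
      then have "j \<in> {..<C}" by auto
      then show "Measurable.pred ?M (\<lambda>x. x j \<le> t)" by measurable
    qed (auto intro: finite_subset[of _ "{..<C}"])
    then show "{x \<in> space ?M. ordstat C x k \<le> t} \<in> sets ?M"
      unfolding pred_def le_iff .
  qed
qed

lemma pred_mem_region:
  assumes "l < U"
  shows "Measurable.pred (model U C) (\<lambda>\<omega>. fst \<omega> l \<in> region C K (ordstat C (snd \<omega>)) j)"
proof -
  consider "j = 1" | "j \<noteq> 1" "j = C - K + 1" | "j \<noteq> 1" "j \<noteq> C - K + 1" by blast
  then show ?thesis
  proof cases
    case 1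
    \<comment> \<open>The measurability prover fails on \<open>\<le>\<close> between these real terms but handles \<open><\<close>.\<close>
    show ?thesis
      unfolding region_def if_P[OF 1] atLeastAtMost_iff not_less[symmetric] model_def
      by (insert assms) measurable
  next
    case 2
    show ?thesis
      unfolding region_def if_not_P[OF 2(1)] if_P[OF 2(2)] greaterThanAtMost_iff not_less[symmetric]
        model_def
      by (insert assms) measurable
  next
    case 3
    show ?thesis
      unfolding region_def if_not_P[OF 3(1)] if_not_P[OF 3(2)] greaterThanAtMost_iff
        not_less[symmetric] model_def
      by (insert assms) measurable
  qed
qed

lemma borel_measurable_Ucount [measurable]:
  "(\<lambda>\<omega>. real (Ucount U C K (fst \<omega>) (snd \<omega>) j)) \<in> borel_measurable (model U C)"
proof -
  have eq: "real (Ucount U C K y x j) = (\<Sum>l<U. if y l \<in> region C K (ordstat C x) j then 1 else 0)"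
    for y x
    by (simp add: Ucount_def sum.If_cases Int_def)
  show ?thesis unfolding eq
    using pred_mem_region by (auto simp: pred_def intro!: borel_measurable_sum measurable_If)
qed

lemma sets_window_event: "window_event r U C K i \<in> sets (model U C)"
  unfolding window_event_def of_nat_sum by measurable

lemma borel_measurable_ip_model:
  "l < U \<Longrightarrow> j < C \<Longrightarrow> (\<lambda>\<omega>. ip (ctype (fst \<omega> l)) (ctype (snd \<omega> j))) \<in> borel_measurable (model U C)"
  unfolding ip_def ctype_def model_def by measurable

lemma pred_is_UC0: "Measurable.pred (model U C) (\<lambda>\<omega>. is_UC0 U C K (fst \<omega>) (snd \<omega>) S)"
proof -
  have eq: "is_UC0 U C K y x S \<longleftrightarrow> (\<forall>l\<in>{..<U}. (S l \<subseteq> {..<C} \<and> card (S l) \<le> K) \<and>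
     (\<forall>T\<in>Pow {..<C}. card T \<le> K \<longrightarrow>
        (\<Sum>j\<in>T. ip (ctype (y l)) (ctype (x j))) \<le> (\<Sum>j\<in>S l. ip (ctype (y l)) (ctype (x j)))))"
    for y x
    unfolding is_UC0_def by auto
  show ?thesis unfolding eq
  proof (intro pred_intros_finite(3) pred_intros_conj1' pred_intros_imp' finite_lessThan
      finite_Pow_iff[THEN iffD2])
    fix l T assume "l \<in> {..<U}" "S l \<subseteq> {..<C} \<and> card (S l) \<le> K" "T \<in> Pow {..<C}"
    then show "Measurable.pred (model U C) (\<lambda>\<omega>.
        (\<Sum>j\<in>T. ip (ctype (fst \<omega> l)) (ctype (snd \<omega> j))) \<le> (\<Sum>j\<in>S l. ip (ctype (fst \<omega> l)) (ctype (snd \<omega> j))))"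
      unfolding pred_def
      by (intro borel_measurable_le borel_measurable_sum borel_measurable_ip_model) auto
  qed
qed

lemma sets_stay_event: "stay_event U C K abar \<in> sets (model U C)"
proof -
  \<comment> \<open>Only the values of \<open>S\<close> on users matter, so \<open>S\<close> can range over a finite set.\<close>
  have "(\<forall>S. is_UC0 U C K y x S \<longrightarrow> K \<le> num_stay U C abar S) \<longleftrightarrow>
        (\<forall>S\<in>{..<U} \<rightarrow>\<^sub>E Pow {..<C}. is_UC0 U C K y x S \<longrightarrow> K \<le> num_stay U C abar S)" for y x
  proof (intro iffI ballI allI impI)
    fix S assume all: "\<forall>S\<in>{..<U} \<rightarrow>\<^sub>E Pow {..<C}. is_UC0 U C K y x S \<longrightarrow> K \<le> num_stay U C abar S"
      and S: "is_UC0 U C K y x S"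
    have "restrict S {..<U} \<in> {..<U} \<rightarrow>\<^sub>E Pow {..<C}" "is_UC0 U C K y x (restrict S {..<U})"
      using S unfolding is_UC0_def by auto
    moreover have "{l\<in>{..<U}. j \<in> restrict S {..<U} l} = {l\<in>{..<U}. j \<in> S l}" for j
      by auto
    then have "num_stay U C abar (restrict S {..<U}) = num_stay U C abar S"
      unfolding num_stay_def by simp
    ultimately show "K \<le> num_stay U C abar S" using all by metis
  qed auto
  then have "stay_event U C K abar = {\<omega> \<in> space (model U C).
      \<forall>S\<in>{..<U} \<rightarrow>\<^sub>E Pow {..<C}. is_UC0 U C K (fst \<omega>) (snd \<omega>) S \<longrightarrow> K \<le> num_stay U C abar S}"
    unfolding stay_event_def by simp
  also have "\<dots> \<in> sets (model U C)"
    unfolding pred_def[symmetric]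
    by (intro pred_intros_finite(3) pred_intros_logic(4) pred_is_UC0 finite_PiE finite_lessThan
        finite_Pow_iff[THEN iffD2]) (auto simp: pred_def)
  finally show ?thesis .
qed

lemma AE_stay_event_iff_window_events:
  assumes "0 < r" "U = r * C" "K < C" "C < 2 * K"
  shows "AE \<omega> in model U C.
    \<omega> \<in> stay_event U C K (r * K) \<longleftrightarrow> \<omega> \<in> (\<Union>i\<in>{1..C-K+1}. window_event r U C K i)"
  using AE_general_position
proof eventually_elim
  case (elim \<omega>)
  have "0 < C" using assms(3) by simp
  then show ?case
    using all_UC0_stay_iff_window[OF elim assms]
    by (auto simp: stay_event_def mem_window_event_iff[OF assms(1)])
qed

theorem lemma13:
  fixes r U C K abar :: nat
  assumes "0 < r" and "real C / 2 < real K" and "K < C"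
    and "U = r * C" and "abar = r * K"
  shows "measure (model U C)
           {\<omega> \<in> space (model U C). \<forall>S. is_UC0 U C K (fst \<omega>) (snd \<omega>) S
                                 \<longrightarrow> K \<le> num_stay U C abar S}
       = (\<Sum>i = 1..C - K + 1. measure (model U C)
           {\<omega> \<in> space (model U C).
              real (\<Sum>j = 1..i. Ucount U C K (fst \<omega>) (snd \<omega>) j) / real (r * C) \<ge> real K / real C \<and>
              real (\<Sum>j = i..C - K + 1. Ucount U C K (fst \<omega>) (snd \<omega>) j) / real (r * C) \<ge> real K / real C})"
proof -
  have "C < 2 * K" using assms(2) by linarith
  interpret prob_space "model U C" by (rule prob_space_model)
  have "measure (model U C) (stay_event U C K abar)
      = measure (model U C) (\<Union>i\<in>{1..C-K+1}. window_event r U C K i)"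
    using AE_stay_event_iff_window_events[OF assms(1,4,3) \<open>C < 2 * K\<close>] assms(5)
    by (intro measure_eq_AE sets.finite_UN sets_stay_event sets_window_event) auto
  also have "\<dots> = (\<Sum>i = 1..C - K + 1. measure (model U C) (window_event r U C K i))"
    using disjoint_window_events[OF assms(1,4,3) \<open>C < 2 * K\<close>] sets_window_event
    by (intro finite_measure_finite_Union) auto
  finally show ?thesis by (simp only: stay_event_def window_event_def)
qed

end
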